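(* Let $k$ be a real division algebra, $\mathcal Z\subset k$ a discrete subring closed under conjugation, $(a_n)_{n\ge1}$ a sequence in $\mathcal Z$ and $x_0\in k$ with $x_n=T_{a_n}\cdots T_{a_1}x_0$ defined and $\|x_n\|<1$ for all $n\ge0$. Define $Q[\cdot]$ recursively by $P[a_n]=1$, $Q[a_n]=a_n$, and for $i<n$, $P[a_i,\dots,a_n]=Q[a_{i+1},\dots,a_n]$, $Q[a_i,\dots,a_n]=a_iQ[a_{i+1},\dots,a_n]+P[a_{i+1},\dots,a_n]$. Then $Q[a_i,\dots,a_n]\ne0$ for every $n$ and every $1\le i<n$.
   Context: $k\in\{\mathbb{R},\mathbb{C},\mathbb{H},\mathbb{O}\}$ with Euclidean norm $\|x\|^2=x\overline x$; $T_ax=x^{-1}-a$. Discrete means discrete in the Euclidean topology of $k\cong\mathbb{R}^d$. *)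

theory Defs
  imports "HOL-Analysis.Analysis"
begin

text \<open>A real division algebra k in the sense of the paper (R, C, H or O) is modelled,
  via Hurwitz's theorem, as a finite-dimensional Euclidean space with a bilinear
  (possibly non-associative, non-commutative) multiplication with two-sided unit e
  whose Euclidean norm is multiplicative.\<close>

definition normed_div_alg :: "('a::euclidean_space \<Rightarrow> 'a \<Rightarrow> 'a) \<Rightarrow> 'a \<Rightarrow> bool" where
  "normed_div_alg mul e \<longleftrightarrow> bounded_bilinear mul \<and> (\<forall>x. mul e x = x \<and> mul x e = x)
     \<and> (\<forall>x y. norm (mul x y) = norm x * norm y)"

definition cnj :: "'a::euclidean_space \<Rightarrow> 'a \<Rightarrow> 'a" where
  "cnj e x = (2 * (x \<bullet> e)) *\<^sub>R e - x"

definition dinv :: "'a::euclidean_space \<Rightarrow> 'a \<Rightarrow> 'a" where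
  "dinv e x = (1 / (norm x)\<^sup>2) *\<^sub>R cnj e x"

definition Tmap :: "'a::euclidean_space \<Rightarrow> 'a \<Rightarrow> 'a \<Rightarrow> 'a" where
  "Tmap e a x = dinv e x - a"

definition subring :: "('a::euclidean_space \<Rightarrow> 'a \<Rightarrow> 'a) \<Rightarrow> 'a \<Rightarrow> 'a set \<Rightarrow> bool" where
  "subring mul e Z \<longleftrightarrow> 0 \<in> Z \<and> e \<in> Z \<and> (\<forall>x\<in>Z. \<forall>y\<in>Z. x + y \<in> Z \<and> x - y \<in> Z \<and> mul x y \<in> Z)"

text \<open>pq mul e a n k = (P[a_{n-k},...,a_n], Q[a_{n-k},...,a_n]).\<close>
fun pq :: "('a::euclidean_space \<Rightarrow> 'a \<Rightarrow> 'a) \<Rightarrow> 'a \<Rightarrow> (nat \<Rightarrow> 'a) \<Rightarrow> nat \<Rightarrow> nat \<Rightarrow> 'a \<times> 'a" where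
  "pq mul e a n 0 = (e, a n)"
| "pq mul e a n (Suc k) = (snd (pq mul e a n k), mul (a (n - Suc k)) (snd (pq mul e a n k)) + fst (pq mul e a n k))"

definition Qc :: "('a::euclidean_space \<Rightarrow> 'a \<Rightarrow> 'a) \<Rightarrow> 'a \<Rightarrow> (nat \<Rightarrow> 'a) \<Rightarrow> nat \<Rightarrow> nat \<Rightarrow> 'a" where
  "Qc mul e a i n = snd (pq mul e a n (n - i))"

end

theory Submission
  imports Defs
begin

text \<open>Write P[a_i,...,a_n] = t_i Q[a_i,...,a_n]. The recursion then reads
  Q[a_(i-1),...,a_n] = (a_(i-1) + t_i) Q[a_i,...,a_n] and t_(i-1) = (a_(i-1) + t_i)^-1, so t_i is the
  finite continued fraction [0; a_i, ..., a_n], whereas x_(i-1) = (a_i + x_i)^-1 is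
  [0; a_i, ..., a_n + x_n]. The invariant |Q[a_i,...,a_n]| |t_i - x_(i-1)| < 1 holds trivially for
  (P, Q) = (0, 1) and survives each step: inversion divides |t_i - x_(i-1)| by
  |a_(i-1) + t_i| |a_(i-1) + x_(i-1)|, while |Q| is multiplied by |a_(i-1) + t_i|, and
  |a_(i-1) + x_(i-1)| = 1 / |x_(i-2)| > 1. The new Q is nonzero as soon as a_(i-1) + t_i is, which
  follows from |t_i - x_(i-1)| < 1 < |a_(i-1) + x_(i-1)| provided |Q| \<ge> 1. And every nonzero z of
  a discrete subring closed under conjugation has |z| \<ge> 1, for otherwise its elements
  (z-bar z)^k = |z|^(2k) would accumulate at 0.\<close>

lemma norm_scaleR_inverse_diff:
  fixes p q :: "'a::real_inner"
  assumes "p \<noteq> 0" "q \<noteq> 0"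
  shows "norm ((1 / (norm p)\<^sup>2) *\<^sub>R p - (1 / (norm q)\<^sup>2) *\<^sub>R q) = norm (p - q) / (norm p * norm q)"
proof -
  have pos: "norm p > 0" "norm q > 0"
    using assms by auto
  have expand: "(norm (s *\<^sub>R p - t *\<^sub>R q))\<^sup>2 = s\<^sup>2 * (norm p)\<^sup>2 - 2 * s * t * (p \<bullet> q) + t\<^sup>2 * (norm q)\<^sup>2"
    for s t
    unfolding power2_norm_eq_inner
    by (simp add: inner_commute power2_eq_square algebra_simps)
  have "(norm ((1 / (norm p)\<^sup>2) *\<^sub>R p - (1 / (norm q)\<^sup>2) *\<^sub>R q))\<^sup>2
      = ((norm p)\<^sup>2 - 2 * (p \<bullet> q) + (norm q)\<^sup>2) / ((norm p)\<^sup>2 * (norm q)\<^sup>2)"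
    unfolding expand using pos by (simp add: field_simps power2_eq_square)
  also have "\<dots> = (norm (p - q) / (norm p * norm q))\<^sup>2"
    using expand[of 1 1] by (simp add: power_divide power_mult_distrib)
  finally show ?thesis
    by simp
qed

lemma cnj_diff: "cnj e (x - y) = cnj e x - cnj e y"
  and cnj_scaleR: "cnj e (c *\<^sub>R x) = c *\<^sub>R cnj e x"
  unfolding cnj_def by (simp_all add: algebra_simps)

lemma cnj_cnj: "norm e = 1 \<Longrightarrow> cnj e (cnj e u) = u"
  unfolding cnj_def by (simp add: norm_eq_1 algebra_simps)

lemma norm_cnj: "norm e = 1 \<Longrightarrow> norm (cnj e u) = norm u"
  unfolding cnj_def norm_eq_sqrt_inner
  by (simp add: norm_eq_1 inner_commute algebra_simps)

lemma norm_dinv: "norm e = 1 \<Longrightarrow> norm (dinv e u) = 1 / norm u"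
  unfolding dinv_def by (simp add: norm_cnj power2_eq_square)

lemma dinv_dinv:
  assumes "norm e = 1" "u \<noteq> 0"
  shows "dinv e (dinv e u) = u"
proof -
  have "cnj e (dinv e u) = (1 / (norm u)\<^sup>2) *\<^sub>R u"
    using assms(1) by (simp add: dinv_def cnj_scaleR cnj_cnj)
  then have "dinv e (dinv e u) = ((norm u)\<^sup>2 * (1 / (norm u)\<^sup>2)) *\<^sub>R u"
    using assms(1) by (simp add: dinv_def[of e "dinv e u"] norm_dinv power_divide)
  then show ?thesis
    using assms(2) by simp
qed

lemma norm_dinv_diff:
  assumes "norm e = 1" "p \<noteq> 0" "q \<noteq> 0"
  shows "norm (dinv e p - dinv e q) = norm (p - q) / (norm p * norm q)"
proof -
  have "dinv e p - dinv e q = cnj e ((1 / (norm p)\<^sup>2) *\<^sub>R p - (1 / (norm q)\<^sup>2) *\<^sub>R q)"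
    by (simp add: dinv_def cnj_diff cnj_scaleR)
  then show ?thesis
    using assms by (simp add: norm_cnj norm_scaleR_inverse_diff)
qed

lemma Tmap_eq_imp_dinv:
  assumes "norm e = 1" "x \<noteq> 0" "norm x < 1" "Tmap e c x = x'"
  shows "x = dinv e (c + x')" and "1 < norm (c + x')"
proof -
  have "c + x' = dinv e x"
    using assms(4) by (auto simp: Tmap_def)
  then show "x = dinv e (c + x')" and "1 < norm (c + x')"
    using assms by (simp_all add: dinv_dinv norm_dinv)
qed

definition approximates :: "('a::euclidean_space \<Rightarrow> 'a \<Rightarrow> 'a) \<Rightarrow> 'a \<times> 'a \<Rightarrow> 'a \<Rightarrow> bool" where
  "approximates mul PQ y \<longleftrightarrow>
     snd PQ \<noteq> 0 \<and> (\<exists>t. fst PQ = mul t (snd PQ) \<and> norm (snd PQ) * norm (t - y) < 1)"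

context
  fixes mul :: "'a::euclidean_space \<Rightarrow> 'a \<Rightarrow> 'a" and e :: 'a
  assumes alg: "normed_div_alg mul e"
begin

interpretation mul: bounded_bilinear mul
  using alg by (simp add: normed_div_alg_def)

lemma normed_div_alg_mul_unit [simp]: "mul e x = x" "mul x e = x"
  using alg by (simp_all add: normed_div_alg_def)

lemma normed_div_alg_norm_mul: "norm (mul x y) = norm x * norm y"
  using alg by (simp add: normed_div_alg_def)

lemma normed_div_alg_norm_unit: "norm e = 1"
proof -
  obtain b :: 'a where "b \<in> Basis"
    using nonempty_Basis by blast
  then have "e \<noteq> 0"
    using normed_div_alg_mul_unit(1)[of b] mul.zero_left[of b] by (metis nonzero_Basis)
  moreover have "norm e = norm e * norm e"
    using normed_div_alg_norm_mul[of e e] by simp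
  ultimately show ?thesis
    by simp
qed

lemma normed_div_alg_inner_mul_left: "mul x y \<bullet> mul x z = (norm x)\<^sup>2 * (y \<bullet> z)"
proof -
  have "(norm (mul x (y + z)))\<^sup>2 = (norm x)\<^sup>2 * (norm (y + z))\<^sup>2"
    by (simp add: normed_div_alg_norm_mul power_mult_distrib)
  moreover have "(norm (mul x y))\<^sup>2 = (norm x)\<^sup>2 * (norm y)\<^sup>2" "(norm (mul x z))\<^sup>2 = (norm x)\<^sup>2 * (norm z)\<^sup>2"
    by (simp_all add: normed_div_alg_norm_mul power_mult_distrib)
  ultimately show ?thesis
    by (simp add: mul.add_right power2_norm_eq_inner inner_commute algebra_simps)
qed

lemma normed_div_alg_inner_mul_polar:
  "mul x y \<bullet> mul w z + mul w y \<bullet> mul x z = 2 * (x \<bullet> w) * (y \<bullet> z)"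
  using normed_div_alg_inner_mul_left[of "x + w" y z] normed_div_alg_inner_mul_left[of x y z]
    normed_div_alg_inner_mul_left[of w y z]
  by (simp add: mul.add_left power2_norm_eq_inner inner_commute algebra_simps)

lemma normed_div_alg_mul_adjoint: "mul u y \<bullet> z = y \<bullet> mul (cnj e u) z"
  using normed_div_alg_inner_mul_polar[of u y e z]
  by (simp add: cnj_def mul.diff_left mul.scaleR_left algebra_simps)

lemma normed_div_alg_cnj_mul_cancel_left: "mul (cnj e u) (mul u v) = (norm u)\<^sup>2 *\<^sub>R v"
proof -
  have "mul (cnj e u) (mul u v) \<bullet> z = ((norm u)\<^sup>2 *\<^sub>R v) \<bullet> z" for z
    using normed_div_alg_mul_adjoint[of "cnj e u" "mul u v" z] normed_div_alg_inner_mul_left[of u v z]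
    by (simp add: cnj_cnj normed_div_alg_norm_unit)
  then show ?thesis
    by (metis vector_eq_rdot)
qed

lemma normed_div_alg_dinv_mul_cancel_left: "u \<noteq> 0 \<Longrightarrow> mul (dinv e u) (mul u v) = v"
  by (simp add: dinv_def mul.scaleR_left normed_div_alg_cnj_mul_cancel_left)

lemma subring_scaleR_unit_power:
  assumes "subring mul e Z" "r *\<^sub>R e \<in> Z"
  shows "(r ^ Suc k) *\<^sub>R e \<in> Z"
proof (induction k)
  case (Suc k)
  have "mul ((r ^ Suc k) *\<^sub>R e) (r *\<^sub>R e) = (r ^ Suc (Suc k)) *\<^sub>R e"
    by (simp add: mul.scaleR_left mul.scaleR_right)
  then show ?case
    using Suc assms unfolding subring_def by metis
qed (use assms in simp)

lemma discrete_subring_norm_ge_1: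
  assumes ring: "subring mul e Z" and disc: "\<forall>z\<in>Z. \<not> z islimpt Z"
    and conj_closed: "\<forall>z\<in>Z. cnj e z \<in> Z" and "z \<in> Z" "z \<noteq> 0"
  shows "1 \<le> norm z"
proof (rule ccontr)
  assume "\<not> 1 \<le> norm z"
  define r where "r = (norm z)\<^sup>2"
  have r: "0 < r" "r < 1"
    using \<open>\<not> 1 \<le> norm z\<close> \<open>z \<noteq> 0\<close> by (auto simp: r_def power_less_one_iff)
  have "r *\<^sub>R e = mul (cnj e z) z"
    using normed_div_alg_cnj_mul_cancel_left[of z e] by (simp add: r_def)
  then have "r *\<^sub>R e \<in> Z"
    using ring conj_closed \<open>z \<in> Z\<close> unfolding subring_def by simp
  then have "(\<lambda>k. (r ^ Suc k) *\<^sub>R e) k \<in> Z - {0}" for k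
    using subring_scaleR_unit_power[OF ring] r normed_div_alg_norm_unit by auto
  moreover have "(\<lambda>k. r ^ k) \<longlonglongrightarrow> 0"
    using r by (intro LIMSEQ_power_zero) auto
  then have "(\<lambda>k. (r ^ Suc k) *\<^sub>R e) \<longlonglongrightarrow> 0"
    using tendsto_scaleR[OF LIMSEQ_Suc tendsto_const[of e]] by fastforce
  ultimately have "0 islimpt Z"
    unfolding islimpt_sequential by (intro exI[of _ "\<lambda>k. (r ^ Suc k) *\<^sub>R e"]) simp
  then show False
    using disc ring unfolding subring_def by blast
qed

lemma approximates_zero_unit: "norm y < 1 \<Longrightarrow> approximates mul (0, e) y"
  using normed_div_alg_norm_unit by (auto simp: approximates_def intro: exI[of _ 0])

lemma approximates_step:
  assumes "approximates mul (P, Q) y" and "1 \<le> norm Q" and "1 < norm (c + y)"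
  shows "approximates mul (Q, mul c Q + P) (dinv e (c + y))"
proof -
  obtain t where "Q \<noteq> 0" and P: "P = mul t Q" and close: "norm Q * norm (t - y) < 1"
    using assms(1) by (auto simp: approximates_def)
  have "norm (t - y) < 1"
    using close mult_right_mono[OF \<open>1 \<le> norm Q\<close> norm_ge_zero[of "t - y"]] by linarith
  moreover have "norm (c + y) \<le> norm (c + t) + norm (t - y)"
    using norm_triangle_ineq[of "c + t" "y - t"] by (simp add: norm_minus_commute)
  ultimately have "c + t \<noteq> 0"
    using \<open>1 < norm (c + y)\<close> by auto
  have "c + y \<noteq> 0"
    using \<open>1 < norm (c + y)\<close> by auto
  have next_Q: "mul c Q + P = mul (c + t) Q"
    by (simp add: P mul.add_left)
  have "norm (mul (c + t) Q) * norm (dinv e (c + t) - dinv e (c + y))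
      = norm Q * norm (t - y) / norm (c + y)"
    using \<open>c + t \<noteq> 0\<close> \<open>c + y \<noteq> 0\<close>
    by (simp add: normed_div_alg_norm_mul norm_dinv_diff normed_div_alg_norm_unit)
  also have "\<dots> \<le> norm Q * norm (t - y)"
    using \<open>1 < norm (c + y)\<close>
    by (simp add: divide_le_eq mult_le_cancel_left1 not_less mult_nonneg_nonneg)
  finally have "norm (mul (c + t) Q) * norm (dinv e (c + t) - dinv e (c + y)) < 1"
    using close by linarith
  moreover have "Q = mul (dinv e (c + t)) (mul (c + t) Q)"
    using \<open>c + t \<noteq> 0\<close> by (simp add: normed_div_alg_dinv_mul_cancel_left)
  moreover have "mul (c + t) Q \<noteq> 0"
    using \<open>c + t \<noteq> 0\<close> \<open>Q \<noteq> 0\<close> normed_div_alg_norm_mul[of "c + t" Q] by auto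
  ultimately show ?thesis
    unfolding approximates_def next_Q by auto
qed

end

lemma pq_mem_subring:
  assumes "subring mul e Z" "\<forall>j\<in>{n - k..n}. a j \<in> Z"
  shows "fst (pq mul e a n k) \<in> Z \<and> snd (pq mul e a n k) \<in> Z"
  using assms(2)
proof (induction k)
  case 0
  then show ?case
    using assms(1) by (simp add: subring_def)
next
  case (Suc k)
  have "{n - k..n} \<subseteq> {n - Suc k..n}"
    by auto
  then have "a (n - Suc k) \<in> Z" "fst (pq mul e a n k) \<in> Z \<and> snd (pq mul e a n k) \<in> Z"
    using Suc by auto
  then show ?case
    using assms(1) by (simp add: subring_def)
qed

lemma pq_approximates_orbit:
  fixes mul :: "'a::euclidean_space \<Rightarrow> 'a \<Rightarrow> 'a"
  assumes alg: "normed_div_alg mul e"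
    and ring: "subring mul e Z" and Z_norm: "\<forall>z\<in>Z. z \<noteq> 0 \<longrightarrow> 1 \<le> norm z"
    and aZ: "\<forall>j\<ge>1. a j \<in> Z"
    and backward: "\<forall>m. x m = dinv e (a (Suc m) + x (Suc m))"
    and expanding: "\<forall>m. 1 < norm (a (Suc m) + x (Suc m))"
    and small: "\<forall>m. norm (x m) < 1"
  shows "k < n \<Longrightarrow> approximates mul (pq mul e a n k) (x (n - Suc k))"
proof (induction k)
  case 0
  then obtain m where n: "n = Suc m"
    using not0_implies_Suc by blast
  have "approximates mul (e, mul (a n) e + 0) (dinv e (a n + x n))"
    using approximates_step[OF alg approximates_zero_unit[OF alg] _ expanding[rule_format, of m]]
      small normed_div_alg_norm_unit[OF alg] n by simp
  then show ?case
    using backward[rule_format, of m] alg n by simp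
next
  case (Suc k)
  obtain m where m: "n - Suc k = Suc m" and m': "n - Suc (Suc k) = m"
    using Suc.prems by (metis Suc_diff_Suc)
  obtain P Q where PQ: "pq mul e a n k = (P, Q)"
    by fastforce
  have approx: "approximates mul (P, Q) (x (Suc m))"
    using Suc PQ m by simp
  have "\<forall>j\<in>{n - k..n}. a j \<in> Z"
    using aZ Suc.prems by auto
  then have "Q \<in> Z"
    using pq_mem_subring[OF ring] PQ by (metis snd_conv)
  then have "1 \<le> norm Q"
    using Z_norm approx by (simp add: approximates_def)
  have "pq mul e a n (Suc k) = (Q, mul (a (Suc m)) Q + P)"
    using PQ m by simp
  moreover have "x (n - Suc (Suc k)) = dinv e (a (Suc m) + x (Suc m))"
    using backward[rule_format, of m] m' by simp
  ultimately show ?case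
    using approximates_step[OF alg approx \<open>1 \<le> norm Q\<close> expanding[rule_format, of m]]
    by (simp only:)
qed

theorem lemma2p5:
  fixes mul :: "'a::euclidean_space \<Rightarrow> 'a \<Rightarrow> 'a" and e :: 'a
    and Z :: "'a set" and a :: "nat \<Rightarrow> 'a" and x :: "nat \<Rightarrow> 'a"
  assumes alg: "normed_div_alg mul e"
    and ring: "subring mul e Z"
    and disc: "\<forall>z\<in>Z. \<not> z islimpt Z"
    and conj_closed: "\<forall>z\<in>Z. cnj e z \<in> Z"
    and aZ: "\<forall>n\<ge>1. a n \<in> Z"
    and defined: "\<forall>n. x n \<noteq> 0"
    and orbit: "\<forall>n. x (Suc n) = Tmap e (a (Suc n)) (x n)"
    and small: "\<forall>n. norm (x n) < 1"
  shows "\<forall>n i. 1 \<le> i \<and> i < n \<longrightarrow> Qc mul e a i n \<noteq> 0"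
proof (intro allI impI)
  fix n i :: nat
  assume "1 \<le> i \<and> i < n"
  have Z_norm: "\<forall>z\<in>Z. z \<noteq> 0 \<longrightarrow> 1 \<le> norm z"
    using discrete_subring_norm_ge_1[OF alg ring disc conj_closed] by blast
  have "x m = dinv e (a (Suc m) + x (Suc m)) \<and> 1 < norm (a (Suc m) + x (Suc m))" for m
    using Tmap_eq_imp_dinv[OF normed_div_alg_norm_unit[OF alg] defined[rule_format, of m]
        small[rule_format, of m] orbit[rule_format, of m, symmetric]] by blast
  then have backward: "\<forall>m. x m = dinv e (a (Suc m) + x (Suc m))"
    and expanding: "\<forall>m. 1 < norm (a (Suc m) + x (Suc m))"
    by blast+
  have "n - i < n"
    using \<open>1 \<le> i \<and> i < n\<close> by simp
  from pq_approximates_orbit[OF alg ring Z_norm aZ backward expanding small this]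
  show "Qc mul e a i n \<noteq> 0"
    by (simp add: Qc_def approximates_def)
qed

end
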